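(* Let $\Gamma$ be a group with centre $Z\Gamma$, and $G=\bigoplus_{\mathbf{Q}_2}\Gamma\rtimes V$ with $V$ acting by $(v\cdot a)(x)=a(v^{-1}x)$. For $v\in V$ let $p_v(x)=\log_2(v'(v^{-1}x))-\nu(x)+\nu(v^{-1}x)$, $x\in\mathbf{Q}_2$, and for $\zeta\in Z\Gamma$ let $c(\zeta)_v(x)=\zeta^{p_v(x)}$. Then $c(\zeta)$ takes values in $\bigoplus_{\mathbf{Q}_2}Z\Gamma$ and satisfies $c(\zeta)_{vw}=c(\zeta)_v\cdot c(\zeta)_w^v$ for all $v,w\in V$, where $c_w^v(x)=c_w(v^{-1}x)$. Moreover $E:Z\Gamma\to\mathrm{Aut}(G)$, $E_\zeta(av)=a\cdot c(\zeta)_v\cdot v$ ($a\in\bigoplus_{\mathbf{Q}_2}\Gamma$, $v\in V$), is a well-defined injective group morphism.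
   Context: Cantor space $\mathfrak C=\{0,1\}^{\mathbf N}$; $C_m=\{m\cdot x\}$. Thompson's group $V$: homeomorphisms $v$ with $v(m_kx)=m'_kx$ for partitions $\mathfrak C=\bigsqcup C_{m_k}=\bigsqcup C_{m'_k}$; slope $v'(x)=2^{|m_k|-|m'_k|}$ on $C_{m_k}$. $\mathbf{Q}_2\subset\mathfrak C$: eventually-zero sequences, identified with dyadic rationals of $[0,1)$ via $x\mapsto\sum_{n\ge1}x_n2^{-n}$. $\nu$ is the dyadic valuation on $\mathbf{Q}$: $\nu(0)=0$, $\nu(2^kp/q)=k$ for $p,q$ odd. $\bigoplus_{\mathbf{Q}_2}\Gamma$ denotes finitely supported maps $\mathbf{Q}_2\to\Gamma$. *)

theory Defs
  imports "HOL-Algebra.Algebra"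
begin

(* Cantor space {0,1}^N : infinite bit sequences (True = 1), indexed from 0 *)
type_synonym cantor = "nat \<Rightarrow> bool"

definition cat :: "bool list \<Rightarrow> cantor \<Rightarrow> cantor" where
  "cat m x = (\<lambda>n. if n < length m then m ! n else x (n - length m))"

definition cyl :: "bool list \<Rightarrow> cantor set" where
  "cyl m = range (cat m)"

definition is_cyl_partition :: "bool list list \<Rightarrow> bool" where
  "is_cyl_partition ms \<longleftrightarrow> (\<forall>x. \<exists>!k. k < length ms \<and> x \<in> cyl (ms ! k))"

definition describes :: "(cantor \<Rightarrow> cantor) \<Rightarrow> bool list list \<Rightarrow> bool list list \<Rightarrow> bool" where
  "describes v ms ms' \<longleftrightarrow> length ms = length ms' \<and> is_cyl_partition ms \<and> is_cyl_partition ms'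
     \<and> (\<forall>k < length ms. \<forall>x. v (cat (ms ! k) x) = cat (ms' ! k) x)"

definition thompsonV :: "(cantor \<Rightarrow> cantor) set" where
  "thompsonV = {v. \<exists>ms ms'. describes v ms ms'}"

(* log_2 of the slope v'(x) = 2^(|m_k| - |m'_k|) for x in C_{m_k} *)
definition log2_slope :: "(cantor \<Rightarrow> cantor) \<Rightarrow> cantor \<Rightarrow> int" where
  "log2_slope v x = (THE d. \<exists>ms ms' k. describes v ms ms' \<and> k < length ms \<and> x \<in> cyl (ms ! k)
        \<and> d = int (length (ms ! k)) - int (length (ms' ! k)))"

definition Q2 :: "cantor set" where
  "Q2 = {x. finite {n. x n}}"

(* identification with dyadic rationals: x |-> sum_{n>=1} x_n 2^{-n} (our index n corresponds to x_{n+1}) *)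
definition dyadic :: "cantor \<Rightarrow> rat" where
  "dyadic x = (\<Sum>n\<in>{n. x n}. (1/2) ^ Suc n)"

definition nu :: "rat \<Rightarrow> int" where
  "nu r = (if r = 0 then 0 else
     (THE k::int. \<exists>p q::int. odd p \<and> odd q \<and> r = 2 powi k * (of_int p / of_int q)))"

definition pexp :: "(cantor \<Rightarrow> cantor) \<Rightarrow> cantor \<Rightarrow> int" where
  "pexp v x = log2_slope v (inv_into UNIV v x) - nu (dyadic x) + nu (dyadic (inv_into UNIV v x))"

definition center :: "('g, 'b) monoid_scheme \<Rightarrow> 'g set" where
  "center \<Gamma> = {z \<in> carrier \<Gamma>. \<forall>g \<in> carrier \<Gamma>. z \<otimes>\<^bsub>\<Gamma>\<^esub> g = g \<otimes>\<^bsub>\<Gamma>\<^esub> z}"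

(* finitely supported maps Q_2 -> H (H a subset of Gamma), extended by 1 off Q_2 *)
definition dsumQ2 :: "('g, 'b) monoid_scheme \<Rightarrow> 'g set \<Rightarrow> (cantor \<Rightarrow> 'g) set" where
  "dsumQ2 \<Gamma> H = {a. (\<forall>x. a x \<in> H) \<and> (\<forall>x. x \<notin> Q2 \<longrightarrow> a x = \<one>\<^bsub>\<Gamma>\<^esub>)
                     \<and> finite {x. a x \<noteq> \<one>\<^bsub>\<Gamma>\<^esub>}}"

definition cocyc :: "('g, 'b) monoid_scheme \<Rightarrow> 'g \<Rightarrow> (cantor \<Rightarrow> cantor) \<Rightarrow> cantor \<Rightarrow> 'g" where
  "cocyc \<Gamma> \<zeta> v x = (if x \<in> Q2 then \<zeta> [^]\<^bsub>\<Gamma>\<^esub> pexp v x else \<one>\<^bsub>\<Gamma>\<^esub>)"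

(* G = (+)_{Q_2} Gamma x| V, element a v represented as the pair (a, v);
   (a v)(b w) = a (v.b) (v w) with (v.b)(x) = b(v^{-1} x) *)
definition semidir :: "('g, 'b) monoid_scheme \<Rightarrow> ((cantor \<Rightarrow> 'g) \<times> (cantor \<Rightarrow> cantor)) monoid" where
  "semidir \<Gamma> = \<lparr> carrier = dsumQ2 \<Gamma> (carrier \<Gamma>) \<times> thompsonV,
                 monoid.mult = (\<lambda>g h. ((\<lambda>x. fst g x \<otimes>\<^bsub>\<Gamma>\<^esub> fst h (inv_into UNIV (snd g) x)), snd g \<circ> snd h)),
                 monoid.one = ((\<lambda>x. \<one>\<^bsub>\<Gamma>\<^esub>), id) \<rparr>"

definition Emap :: "('g, 'b) monoid_scheme \<Rightarrow> 'g
     \<Rightarrow> ((cantor \<Rightarrow> 'g) \<times> (cantor \<Rightarrow> cantor)) \<Rightarrow> ((cantor \<Rightarrow> 'g) \<times> (cantor \<Rightarrow> cantor))" where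
  "Emap \<Gamma> \<zeta> = (\<lambda>g \<in> carrier (semidir \<Gamma>). ((\<lambda>x. fst g x \<otimes>\<^bsub>\<Gamma>\<^esub> cocyc \<Gamma> \<zeta> (snd g) x), snd g))"

end

(*
  On each cylinder of its domain partition an element v of V replaces a prefix m by a prefix m',
  so log2 v' = |m| - |m'| is locally constant, well defined, and obeys the chain rule; the
  valuation terms of p_v telescope, so p is an additive cocycle and c(zeta) = zeta^p is a
  multiplicative one. If x = m'.y with y a nonzero dyadic, then nu(x) = -(|m'| + N + 1), N the
  position of the last 1 of y, and likewise nu(v^-1 x) = -(|m| + N + 1): the slope is cancelled
  exactly, so p_v is supported on the finitely many endpoints m'.0. As zeta is central, the
  cocycle identity makes E_zeta multiplicative, E_zeta E_eta = E_(zeta eta) makes it bijective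
  and zeta |-> E_zeta a morphism, and p_flip(0) = -1 for the flip of the first digit makes
  zeta |-> E_zeta injective.
*)

theory Submission
  imports Defs "HOL-Library.Sublist"
begin

section \<open>Words and cylinders\<close>

lemma cat_append: "cat (a @ b) y = cat a (cat b y)"
  by (auto simp: cat_def nth_append fun_eq_iff)

definition shift :: "nat \<Rightarrow> cantor \<Rightarrow> cantor" where
  "shift k x = (\<lambda>n. x (n + k))"

lemma shift_cat [simp]: "shift (length m) (cat m y) = y"
  by (simp add: shift_def cat_def fun_eq_iff)

lemma cat_eq_cat_iff [simp]: "cat m y = cat m z \<longleftrightarrow> y = z"
  by (metis shift_cat)

lemma cyl_iff: "x \<in> cyl m \<longleftrightarrow> (\<forall>i<length m. x i = m ! i)"
proof
  assume "\<forall>i<length m. x i = m ! i"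
  then have "x = cat m (shift (length m) x)"
    by (auto simp: cat_def shift_def fun_eq_iff)
  then show "x \<in> cyl m"
    unfolding cyl_def by (metis rangeI)
qed (auto simp: cyl_def cat_def)

lemma cat_in_cyl [simp]: "cat m y \<in> cyl m"
  by (simp add: cyl_def)

lemma cat_shift_cyl: "x \<in> cyl m \<Longrightarrow> cat m (shift (length m) x) = x"
  by (auto simp: cyl_iff cat_def shift_def fun_eq_iff)

lemma cyl_appendD: "x \<in> cyl (a @ d) \<Longrightarrow> x \<in> cyl a"
  by (auto simp: cyl_iff nth_append)

lemma cat_in_cyl_append_iff: "cat a y \<in> cyl (a @ d) \<longleftrightarrow> y \<in> cyl d"
  by (auto simp: cyl_iff cat_def nth_append)

lemma not_parallel_cases:
  assumes "\<not> a \<parallel> b"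
  obtains "prefix a b" | "prefix b a"
  using assms unfolding parallel_def by blast

lemma cyl_not_parallel:
  assumes "x \<in> cyl a" and "x \<in> cyl b"
  shows "\<not> a \<parallel> b"
proof -
  define xs where "xs = map x [0..<length a + length b]"
  have "a = take (length a) xs" and "b = take (length b) xs"
    using assms by (auto simp: cyl_iff xs_def intro: nth_equalityI)
  then show ?thesis
    by (metis parallelD1 parallelD2 prefix_same_cases take_is_prefix)
qed

lemma cat_in_cyl_relabel:
  assumes "\<not> m' \<parallel> n"
  shows "cat m y \<in> cyl (m @ drop (length m') n) \<longleftrightarrow> cat m' y \<in> cyl n"
  using assms
proof (cases rule: not_parallel_cases)
  assume "prefix m' n"
  then obtain d where "n = m' @ d"
    by (auto simp: prefix_def)
  then show ?thesis
    by (simp add: cat_in_cyl_append_iff)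
next
  assume "prefix n m'"
  then obtain d where "m' = n @ d"
    by (auto simp: prefix_def)
  then show ?thesis
    by (auto simp: cyl_iff cat_def nth_append)
qed

lemma cat_eq_length:
  assumes "\<And>y. cat a y = cat b y"
  shows "length a = length b"
proof (rule ccontr)
  have diverge: False if "length a < length b" "\<And>y. cat a y = cat b y" for a b :: "bool list"
  proof -
    have "cat a (\<lambda>_. \<not> b ! length a) (length a) = cat b (\<lambda>_. \<not> b ! length a) (length a)"
      using that(2) by simp
    with that(1) show False
      by (simp add: cat_def)
  qed
  assume "length a \<noteq> length b"
  then show False
    using diverge[of a b] diverge[of b a] assms by (metis linorder_neqE_nat)
qed

section \<open>Thompson's group \<open>V\<close>\<close>

definition replaces_prefix :: "(cantor \<Rightarrow> cantor) \<Rightarrow> bool list \<Rightarrow> bool list \<Rightarrow> bool" where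
  "replaces_prefix v m m' \<longleftrightarrow> (\<forall>y. v (cat m y) = cat m' y)"

lemma describes_replaces_prefix:
  "describes v ms ms' \<Longrightarrow> k < length ms \<Longrightarrow> replaces_prefix v (ms ! k) (ms' ! k)"
  by (simp add: describes_def replaces_prefix_def)

lemma replaces_prefix_cyl:
  assumes "replaces_prefix v m m'" and "x \<in> cyl m"
  shows "v x = cat m' (shift (length m) x)"
  using assms(1) cat_shift_cyl[OF assms(2)] unfolding replaces_prefix_def by metis

lemma cyl_partition_cover: "is_cyl_partition ms \<Longrightarrow> \<exists>k<length ms. x \<in> cyl (ms ! k)"
  unfolding is_cyl_partition_def by blast

lemma cyl_partition_unique:
  "is_cyl_partition ms \<Longrightarrow> k < length ms \<Longrightarrow> x \<in> cyl (ms ! k) \<Longrightarrow>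
   k' < length ms \<Longrightarrow> x \<in> cyl (ms ! k') \<Longrightarrow> k = k'"
  unfolding is_cyl_partition_def by blast

lemma cyl_partition_map:
  assumes "distinct P" and "\<And>x. \<exists>!p. p \<in> set P \<and> x \<in> cyl (f p)"
  shows "is_cyl_partition (map f P)"
  unfolding is_cyl_partition_def
proof
  fix x
  obtain p where p: "p \<in> set P" "x \<in> cyl (f p)"
    using assms(2) by blast
  then obtain k where k: "k < length P" "P ! k = p"
    by (auto simp: in_set_conv_nth)
  show "\<exists>!k. k < length (map f P) \<and> x \<in> cyl (map f P ! k)"
  proof (rule ex1I[of _ k])
    fix k'
    assume k': "k' < length (map f P) \<and> x \<in> cyl (map f P ! k')"
    then have "P ! k' = P ! k"
      using assms(2) p k by (metis length_map nth_map nth_mem)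
    then show "k' = k"
      using assms(1) k' k(1) nth_eq_iff_index_eq by fastforce
  qed (use k p in simp)
qed

lemma thompsonV_local:
  assumes "v \<in> thompsonV"
  obtains m m' where "x \<in> cyl m" and "replaces_prefix v m m'"
proof -
  obtain ms ms' where d: "describes v ms ms'"
    using assms by (auto simp: thompsonV_def)
  then have "is_cyl_partition ms"
    by (simp add: describes_def)
  then obtain k where "k < length ms" "x \<in> cyl (ms ! k)"
    using cyl_partition_cover by blast
  with describes_replaces_prefix[OF d] that show thesis
    by blast
qed

lemma thompsonV_local_image:
  assumes "v \<in> thompsonV"
  obtains m m' where "x \<in> cyl m'" and "replaces_prefix v m m'"
proof -
  obtain ms ms' where d: "describes v ms ms'"
    using assms by (auto simp: thompsonV_def)
  then have "is_cyl_partition ms'" and "length ms' = length ms"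
    by (simp_all add: describes_def)
  then obtain k where "k < length ms" "x \<in> cyl (ms' ! k)"
    using cyl_partition_cover by metis
  with describes_replaces_prefix[OF d] that show thesis
    by blast
qed

lemma thompsonV_surj:
  assumes "v \<in> thompsonV"
  shows "surj v"
proof -
  have "x \<in> range v" for x
  proof -
    obtain m m' where "x \<in> cyl m'" and "replaces_prefix v m m'"
      using thompsonV_local_image[OF assms] .
    then have "v (cat m (shift (length m') x)) = x"
      by (simp add: replaces_prefix_def cat_shift_cyl)
    then show ?thesis
      by (metis rangeI)
  qed
  then show ?thesis
    by blast
qed

lemma thompsonV_inj:
  assumes "v \<in> thompsonV"
  shows "inj v"
proof (rule injI)
  fix a b
  assume eq: "v a = v b"
  obtain ms ms' where d: "describes v ms ms'"
    using assms by (auto simp: thompsonV_def)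
  then have p: "is_cyl_partition ms" "is_cyl_partition ms'" "length ms = length ms'"
    by (auto simp: describes_def)
  obtain k k' where k: "k < length ms" "a \<in> cyl (ms ! k)"
    and k': "k' < length ms" "b \<in> cyl (ms ! k')"
    using cyl_partition_cover[OF p(1)] by meson
  have a: "v a = cat (ms' ! k) (shift (length (ms ! k)) a)"
    and b: "v b = cat (ms' ! k') (shift (length (ms ! k')) b)"
    using replaces_prefix_cyl describes_replaces_prefix[OF d] k k' by blast+
  have "v a \<in> cyl (ms' ! k)" "v a \<in> cyl (ms' ! k')"
    using a b eq by (metis cat_in_cyl)+
  then have "k = k'"
    using cyl_partition_unique[OF p(2)] k(1) k'(1) p(3) by simp
  then have "shift (length (ms ! k)) a = shift (length (ms ! k)) b"
    using a b eq by simp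
  then show "a = b"
    using cat_shift_cyl k(2) k'(2) \<open>k = k'\<close> by metis
qed

lemma thompsonV_bij: "v \<in> thompsonV \<Longrightarrow> bij v"
  using thompsonV_inj thompsonV_surj by (simp add: bij_def)

lemma thompsonV_inv_cat:
  assumes "v \<in> thompsonV" and "replaces_prefix v m m'"
  shows "inv_into UNIV v (cat m' y) = cat m y"
proof -
  have "v (cat m y) = cat m' y"
    using assms(2) by (simp add: replaces_prefix_def)
  then show ?thesis
    using thompsonV_inj[OF assms(1)] by (metis inv_f_f)
qed

lemma replaces_prefix_length_diff:
  assumes "replaces_prefix v m m'" "replaces_prefix v n n'" "x \<in> cyl m" "x \<in> cyl n"
  shows "int (length m) - int (length m') = int (length n) - int (length n')"
proof -
  have extend: "int (length m) - int (length m') = int (length n) - int (length n')"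
    if "replaces_prefix v m m'" "replaces_prefix v n n'" "prefix m n" for m m' n n'
  proof -
    obtain u where n: "n = m @ u"
      using \<open>prefix m n\<close> by (auto simp: prefix_def)
    have "cat n' y = cat (m' @ u) y" for y
      using that unfolding replaces_prefix_def n cat_append by metis
    then have "length n' = length (m' @ u)"
      by (rule cat_eq_length)
    then show ?thesis
      using n by simp
  qed
  from cyl_not_parallel[OF assms(3,4)] show ?thesis
  proof (cases rule: not_parallel_cases)
    assume "prefix m n"
    then show ?thesis
      using extend assms(1,2) by blast
  next
    assume "prefix n m"
    then show ?thesis
      using extend[of n n' m m'] assms(1,2) by simp
  qed
qed

lemma log2_slope_eq:
  assumes v: "v \<in> thompsonV" and x: "x \<in> cyl m" and m: "replaces_prefix v m m'"
  shows "log2_slope v x = int (length m) - int (length m')"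
  unfolding log2_slope_def
proof (rule the_equality)
  obtain ms ms' where d: "describes v ms ms'"
    using v by (auto simp: thompsonV_def)
  then have "is_cyl_partition ms"
    by (simp add: describes_def)
  then obtain k where k: "k < length ms" "x \<in> cyl (ms ! k)"
    using cyl_partition_cover by blast
  have "int (length m) - int (length m') = int (length (ms ! k)) - int (length (ms' ! k))"
    using replaces_prefix_length_diff[OF m describes_replaces_prefix[OF d k(1)] x k(2)] .
  with d k show "\<exists>ms ms' k. describes v ms ms' \<and> k < length ms \<and> x \<in> cyl (ms ! k) \<and>
      int (length m) - int (length m') = int (length (ms ! k)) - int (length (ms' ! k))"
    by blast
next
  fix d
  assume "\<exists>ms ms' k. describes v ms ms' \<and> k < length ms \<and> x \<in> cyl (ms ! k) \<and>
      d = int (length (ms ! k)) - int (length (ms' ! k))"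
  then obtain ms ms' k where d: "describes v ms ms'" and k: "k < length ms" "x \<in> cyl (ms ! k)"
    and "d = int (length (ms ! k)) - int (length (ms' ! k))"
    by blast
  then show "d = int (length m) - int (length m')"
    using replaces_prefix_length_diff[OF describes_replaces_prefix[OF d k(1)] m k(2) x] by simp
qed

lemma replaces_prefix_comp:
  assumes w: "replaces_prefix w m m'" and v: "replaces_prefix v n n'"
    and comparable: "\<not> m' \<parallel> n"
  shows "replaces_prefix (v \<circ> w) (m @ drop (length m') n) (n' @ drop (length n) m')"
  using comparable
proof (cases rule: not_parallel_cases)
  assume "prefix m' n"
  then obtain d where "n = m' @ d"
    by (auto simp: prefix_def)
  then show ?thesis
    using w v by (simp add: replaces_prefix_def cat_append)
next
  assume "prefix n m'"
  then obtain d where "m' = n @ d"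
    by (auto simp: prefix_def)
  then show ?thesis
    using w v by (simp add: replaces_prefix_def cat_append)
qed

text \<open>Cell \<open>(k, j)\<close> is the part of \<open>cyl (ms ! k)\<close> that the prefix replacement
  \<open>ms ! k \<mapsto> ms' ! k\<close> sends into \<open>cyl (ns ! j)\<close>.\<close>
lemma cyl_partition_refine:
  assumes ms: "is_cyl_partition ms" and ns: "is_cyl_partition ns" and len: "length ms' = length ms"
    and P: "distinct P"
      "set P = {(k, j). k < length ms \<and> j < length ns \<and> \<not> ms' ! k \<parallel> ns ! j}"
  shows "is_cyl_partition (map (\<lambda>(k, j). ms ! k @ drop (length (ms' ! k)) (ns ! j)) P)"
proof (rule cyl_partition_map[OF P(1)])
  fix x
  obtain k where k: "k < length ms" "x \<in> cyl (ms ! k)"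
    using cyl_partition_cover[OF ms] by blast
  define y where "y = shift (length (ms ! k)) x"
  have x: "x = cat (ms ! k) y"
    using cat_shift_cyl[OF k(2)] by (simp add: y_def)
  obtain j where j: "j < length ns" "cat (ms' ! k) y \<in> cyl (ns ! j)"
    using cyl_partition_cover[OF ns] by blast
  have comparable: "\<not> ms' ! k \<parallel> ns ! j"
    using cyl_not_parallel[OF cat_in_cyl j(2)] .
  show "\<exists>!p. p \<in> set P \<and> x \<in> cyl ((\<lambda>(k, j). ms ! k @ drop (length (ms' ! k)) (ns ! j)) p)"
  proof (rule ex1I[of _ "(k, j)"])
    show "(k, j) \<in> set P \<and> x \<in> cyl ((\<lambda>(k, j). ms ! k @ drop (length (ms' ! k)) (ns ! j)) (k, j))"
      using P(2) k j comparable x cat_in_cyl_relabel by auto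
  next
    fix p
    assume "p \<in> set P \<and> x \<in> cyl ((\<lambda>(k, j). ms ! k @ drop (length (ms' ! k)) (ns ! j)) p)"
    then obtain k' j' where p: "p = (k', j')" "k' < length ms" "j' < length ns"
        "\<not> ms' ! k' \<parallel> ns ! j'"
        "x \<in> cyl (ms ! k' @ drop (length (ms' ! k')) (ns ! j'))"
      using P(2) by auto
    have "k' = k"
      using cyl_partition_unique[OF ms p(2) cyl_appendD[OF p(5)] k] .
    moreover from this have "j' = j"
      using cyl_partition_unique[OF ns p(3) _ j] cat_in_cyl_relabel[OF p(4)] p(5) x by metis
    ultimately show "p = (k, j)"
      using p(1) by simp
  qed
qed

lemma thompsonV_comp:
  assumes v: "v \<in> thompsonV" and w: "w \<in> thompsonV"
  shows "v \<circ> w \<in> thompsonV"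
proof -
  obtain ns ns' where dv: "describes v ns ns'"
    using v by (auto simp: thompsonV_def)
  obtain ms ms' where dw: "describes w ms ms'"
    using w by (auto simp: thompsonV_def)
  have pv: "is_cyl_partition ns" "is_cyl_partition ns'" "length ns' = length ns"
    and pw: "is_cyl_partition ms" "is_cyl_partition ms'" "length ms' = length ms"
    using dv dw by (auto simp: describes_def)
  define P where "P = filter (\<lambda>(k, j). \<not> ms' ! k \<parallel> ns ! j)
      (List.product [0..<length ms] [0..<length ns])"
  have setP: "set P = {(k, j). k < length ms \<and> j < length ns \<and> \<not> ms' ! k \<parallel> ns ! j}"
    by (auto simp: P_def)
  have "distinct P"
    by (simp add: P_def distinct_product)
  define dom where "dom = map (\<lambda>(k, j). ms ! k @ drop (length (ms' ! k)) (ns ! j)) P"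
  define img where "img = map (\<lambda>(k, j). ns' ! j @ drop (length (ns ! j)) (ms' ! k)) P"
  have "is_cyl_partition dom"
    unfolding dom_def using cyl_partition_refine[OF pw(1) pv(1) pw(3) \<open>distinct P\<close> setP] .
  moreover have "is_cyl_partition img"
  proof -
    txt \<open>This is the same construction for the inverse composite \<open>w\<inverse> \<circ> v\<inverse>\<close>.\<close>
    have "distinct (map prod.swap P)"
      using \<open>distinct P\<close> by (simp add: distinct_map)
    moreover have "set (map prod.swap P) =
        {(j, k). j < length ns' \<and> k < length ms' \<and> \<not> ns ! j \<parallel> ms' ! k}"
      using setP pv(3) pw(3) by (auto simp: parallel_commute)
    ultimately have "is_cyl_partition
        (map (\<lambda>(j, k). ns' ! j @ drop (length (ns ! j)) (ms' ! k)) (map prod.swap P))"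
      by (rule cyl_partition_refine[OF pv(2) pw(2) pv(3)[symmetric]])
    then show ?thesis
      by (simp add: img_def comp_def split_def)
  qed
  moreover have "replaces_prefix (v \<circ> w) (dom ! i) (img ! i)" if "i < length P" for i
  proof -
    obtain k j where kj: "P ! i = (k, j)"
      by fastforce
    then have "(k, j) \<in> set P"
      using that by (metis nth_mem)
    then have "k < length ms" "j < length ns"
      and comparable: "\<not> ms' ! k \<parallel> ns ! j"
      using setP by auto
    with kj that show ?thesis
      using replaces_prefix_comp[OF describes_replaces_prefix[OF dw] describes_replaces_prefix[OF dv]
          comparable]
      by (simp add: dom_def img_def)
  qed
  moreover have "length dom = length P" and "length img = length P"
    by (simp_all add: dom_def img_def)
  ultimately have "describes (v \<circ> w) dom img"
    unfolding describes_def replaces_prefix_def by simp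
  then show ?thesis
    by (auto simp: thompsonV_def)
qed

lemma log2_slope_comp:
  assumes v: "v \<in> thompsonV" and w: "w \<in> thompsonV"
  shows "log2_slope (v \<circ> w) x = log2_slope v (w x) + log2_slope w x"
proof -
  obtain m m' where m: "x \<in> cyl m" "replaces_prefix w m m'"
    using thompsonV_local[OF w] .
  obtain n n' where n: "w x \<in> cyl n" "replaces_prefix v n n'"
    using thompsonV_local[OF v] .
  have wx: "w x = cat m' (shift (length m) x)"
    using replaces_prefix_cyl m by blast
  then have comparable: "\<not> m' \<parallel> n"
    using cyl_not_parallel n(1) by (metis cat_in_cyl)
  have "x \<in> cyl (m @ drop (length m') n)"
    using cat_in_cyl_relabel[OF comparable] cat_shift_cyl[OF m(1)] n(1) wx by metis
  then have "log2_slope (v \<circ> w) x =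
      int (length (m @ drop (length m') n)) - int (length (n' @ drop (length n) m'))"
    using log2_slope_eq[OF thompsonV_comp[OF v w]] replaces_prefix_comp[OF m(2) n(2) comparable]
    by blast
  also have "\<dots> = (int (length n) - int (length n')) + (int (length m) - int (length m'))"
    using comparable by (cases rule: not_parallel_cases) (auto dest: prefix_length_le)
  finally show ?thesis
    using log2_slope_eq[OF v n] log2_slope_eq[OF w m] by simp
qed

section \<open>The dyadic valuation\<close>

lemma power_int_odd_ratio_exponent_unique:
  fixes p q p' q' :: int
  assumes odd: "odd p" "odd q" "odd p'" "odd q'"
    and eq: "(2::rat) powi k * (of_int p / of_int q) = 2 powi k' * (of_int p' / of_int q')"
  shows "k = k'"
proof -
  have less_impossible: False
    if "odd p" "odd q" "odd p'" "odd q'" "k < k'"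
      "(2::rat) powi k * (of_int p / of_int q) = 2 powi k' * (of_int p' / of_int q')"
    for p q p' q' :: int and k k' :: int
  proof -
    have "(2::rat) powi k' = 2 powi k * 2 powi (k' - k)"
      by (simp add: power_int_add[symmetric])
    also have "(2::rat) powi (k' - k) = 2 ^ nat (k' - k)"
      using \<open>k < k'\<close> by (simp add: power_int_def)
    finally have "(2::rat) powi k' = 2 powi k * 2 ^ nat (k' - k)" .
    with that(6) have "(2::rat) powi k * (of_int p / of_int q) =
        2 powi k * (2 ^ nat (k' - k) * (of_int p' / of_int q'))"
      by (simp only: mult.assoc)
    moreover have "(2::rat) powi k \<noteq> 0"
      by simp
    ultimately have "(of_int p / of_int q :: rat) = 2 ^ nat (k' - k) * (of_int p' / of_int q')"
      by (metis mult_left_cancel)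
    moreover have "(of_int q :: rat) \<noteq> 0" and "(of_int q' :: rat) \<noteq> 0"
      using that(2,4) by auto
    ultimately have "(of_int (p * q') :: rat) = of_int (2 ^ nat (k' - k) * p' * q)"
      by (simp add: field_simps)
    then have "p * q' = 2 ^ nat (k' - k) * p' * q"
      by (simp only: of_int_eq_iff)
    moreover have "even ((2::int) ^ nat (k' - k))"
      using \<open>k < k'\<close> by simp
    ultimately show False
      using that(1,4) by (metis even_mult_iff)
  qed
  show ?thesis
    using less_impossible[OF odd _ eq] less_impossible[OF odd(3,4,1,2) _ eq[symmetric]]
    by (metis linorder_neqE)
qed

lemma nu_power_int_odd_ratio:
  fixes p q :: int
  assumes "odd p" "odd q"
  shows "nu (2 powi k * (of_int p / of_int q)) = k"
proof -
  have "(2::rat) powi k * (of_int p / of_int q) \<noteq> 0"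
    using assms by auto
  moreover have "(THE k'. \<exists>p' q' :: int. odd p' \<and> odd q' \<and>
      (2::rat) powi k * (of_int p / of_int q) = 2 powi k' * (of_int p' / of_int q')) = k"
    using assms power_int_odd_ratio_exponent_unique by (intro the_equality) blast+
  ultimately show ?thesis
    by (simp add: nu_def)
qed

text \<open>\<open>dyadic x = c / 2 ^ Suc N\<close> where \<open>N\<close> is the last digit 1 of \<open>x\<close> and \<open>c\<close> sums
  \<open>2 ^ (N - n)\<close> over the digits \<open>n\<close> equal to 1; only \<open>n = N\<close> contributes an odd term.\<close>
lemma nu_dyadic:
  assumes fin: "finite {n. x n}" and nonzero: "{n. x n} \<noteq> {}"
  shows "nu (dyadic x) = - int (Suc (Max {n. x n}))"
proof -
  define S where "S = {n. x n}"
  define N where "N = Max S"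
  define c :: nat where "c = (\<Sum>n\<in>S. 2 ^ (N - n))"
  have le_N: "n \<le> N" if "n \<in> S" for n
    using fin that by (simp add: N_def S_def)
  have "N \<in> S"
    unfolding N_def S_def using fin nonzero by (rule Max_in)
  have "dyadic x * 2 ^ Suc N = (\<Sum>n\<in>S. (1 / 2) ^ Suc n * 2 ^ Suc N)"
    by (simp add: dyadic_def S_def sum_distrib_right)
  also have "\<dots> = (\<Sum>n\<in>S. 2 ^ (N - n))"
    by (rule sum.cong) (simp_all add: le_N power_diff power_one_over)
  finally have numerator: "dyadic x = of_nat c / 2 ^ Suc N"
    by (simp add: c_def eq_divide_eq)
  have "c = 2 ^ (N - N) + (\<Sum>n\<in>S - {N}. 2 ^ (N - n))"
    unfolding c_def using fin \<open>N \<in> S\<close> unfolding S_def by (rule sum.remove)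
  moreover have "even (\<Sum>n\<in>S - {N}. 2 ^ (N - n) :: nat)"
  proof (rule dvd_sum)
    fix n
    assume "n \<in> S - {N}"
    then have "n < N"
      using le_N by force
    then show "even (2 ^ (N - n) :: nat)"
      by simp
  qed
  ultimately have "odd (int c)"
    by (simp only: even_of_nat_iff even_add) simp
  have "(2::rat) powi (- int (Suc N)) = 1 / 2 ^ Suc N"
    by (simp only: power_int_minus power_int_of_nat inverse_eq_divide)
  then have "dyadic x = 2 powi (- int (Suc N)) * (of_int (int c) / of_int 1)"
    by (simp add: numerator)
  moreover have "nu (2 powi (- int (Suc N)) * (of_int (int c) / of_int 1)) = - int (Suc N)"
    using \<open>odd (int c)\<close> by (intro nu_power_int_odd_ratio) simp_all
  ultimately show ?thesis
    by (simp add: N_def S_def)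
qed

lemma Q2_cat_iff [simp]: "cat m y \<in> Q2 \<longleftrightarrow> y \<in> Q2"
proof -
  have "{n. cat m y n} = {i. i < length m \<and> m ! i} \<union> (\<lambda>n. n + length m) ` {n. y n}"
  proof (rule Set.set_eqI, rule iffI)
    fix n
    assume "n \<in> {n. cat m y n}"
    then show "n \<in> {i. i < length m \<and> m ! i} \<union> (\<lambda>n. n + length m) ` {n. y n}"
      by (cases "n < length m") (auto simp: cat_def image_iff intro: exI[of _ "n - length m"])
  qed (auto simp: cat_def)
  moreover have "finite ((\<lambda>n. n + length m) ` A) \<longleftrightarrow> finite A" for A :: "nat set"
    by (simp add: finite_image_iff inj_on_def)
  ultimately show ?thesis
    by (simp add: Q2_def)
qed

lemma Max_cat:
  assumes "y \<in> Q2" and "{n. y n} \<noteq> {}"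
  shows "Max {n. cat u y n} = length u + Max {n. y n}"
proof (rule Max_eqI)
  show "finite {n. cat u y n}"
    using assms(1) Q2_cat_iff[of u y] by (simp add: Q2_def)
  show "length u + Max {n. y n} \<in> {n. cat u y n}"
    using assms Max_in[of "{n. y n}"] by (simp add: Q2_def cat_def)
  fix n
  assume "n \<in> {n. cat u y n}"
  then show "n \<le> length u + Max {n. y n}"
  proof (cases "n < length u")
    case False
    with \<open>n \<in> {n. cat u y n}\<close> have "y (n - length u)"
      by (simp add: cat_def)
    then have "n - length u \<le> Max {n. y n}"
      using assms(1) by (intro Max_ge) (simp_all add: Q2_def)
    then show ?thesis
      by simp
  qed simp
qed

lemma nu_dyadic_cat:
  assumes "y \<in> Q2" and "{n. y n} \<noteq> {}"
  shows "nu (dyadic (cat u y)) = nu (dyadic y) - int (length u)"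
proof -
  have "{n. cat u y n} \<noteq> {}"
    using Max_cat[OF assms] Max_in[of "{n. y n}"] assms by (auto simp: Q2_def cat_def)
  then show ?thesis
    using assms Max_cat[OF assms] Q2_cat_iff[of u y] by (simp add: nu_dyadic Q2_def)
qed

section \<open>The exponent \<open>p\<^sub>v\<close>\<close>

lemma thompsonV_Q2_iff:
  assumes "v \<in> thompsonV"
  shows "v x \<in> Q2 \<longleftrightarrow> x \<in> Q2"
proof -
  obtain m m' where "x \<in> cyl m" and "replaces_prefix v m m'"
    using thompsonV_local[OF assms] .
  then show ?thesis
    using replaces_prefix_cyl cat_shift_cyl Q2_cat_iff by metis
qed

lemma thompsonV_inv_Q2_iff:
  assumes "v \<in> thompsonV"
  shows "inv_into UNIV v x \<in> Q2 \<longleftrightarrow> x \<in> Q2"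
  using thompsonV_Q2_iff[OF assms, of "inv_into UNIV v x"] thompsonV_surj[OF assms]
  by (simp add: f_inv_into_f)

text \<open>Away from the dyadic endpoints \<open>cat m' 0\<close> of the cylinders, the slope of \<open>v\<close> is
  exactly compensated by the change of valuation.\<close>
lemma pexp_cat_eq_0:
  assumes v: "v \<in> thompsonV" and m: "replaces_prefix v m m'"
    and y: "y \<in> Q2" "{n. y n} \<noteq> {}"
  shows "pexp v (cat m' y) = 0"
proof -
  have "inv_into UNIV v (cat m' y) = cat m y"
    using thompsonV_inv_cat[OF v m] .
  moreover have "log2_slope v (cat m y) = int (length m) - int (length m')"
    using log2_slope_eq[OF v cat_in_cyl m] .
  ultimately show ?thesis
    by (simp add: pexp_def nu_dyadic_cat[OF y])
qed

lemma pexp_finite_support: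
  assumes v: "v \<in> thompsonV"
  shows "finite {x \<in> Q2. pexp v x \<noteq> 0}"
proof -
  obtain ms ms' where d: "describes v ms ms'"
    using v by (auto simp: thompsonV_def)
  then have p: "is_cyl_partition ms'" "length ms' = length ms"
    by (simp_all add: describes_def)
  have "{x \<in> Q2. pexp v x \<noteq> 0} \<subseteq> (\<lambda>m'. cat m' (\<lambda>_. False)) ` set ms'"
  proof
    fix x
    assume x: "x \<in> {x \<in> Q2. pexp v x \<noteq> 0}"
    obtain k where k: "k < length ms'" "x \<in> cyl (ms' ! k)"
      using cyl_partition_cover[OF p(1)] by blast
    define y where "y = shift (length (ms' ! k)) x"
    have xy: "x = cat (ms' ! k) y"
      using cat_shift_cyl[OF k(2)] by (simp add: y_def)
    have "y \<in> Q2"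
      using x xy by simp
    moreover have "pexp v (cat (ms' ! k) y) \<noteq> 0"
      using x xy by simp
    ultimately have "y = (\<lambda>_. False)"
      using pexp_cat_eq_0[OF v describes_replaces_prefix[OF d]] k(1) p(2) by fastforce
    then show "x \<in> (\<lambda>m'. cat m' (\<lambda>_. False)) ` set ms'"
      using xy k(1) by auto
  qed
  then show ?thesis
    by (rule finite_subset) simp
qed

lemma pexp_comp:
  assumes v: "v \<in> thompsonV" and w: "w \<in> thompsonV"
  shows "pexp (v \<circ> w) x = pexp v x + pexp w (inv_into UNIV v x)"
proof -
  have "inv_into UNIV (v \<circ> w) x = inv_into UNIV w (inv_into UNIV v x)"
    using o_inv_distrib[OF thompsonV_bij[OF v] thompsonV_bij[OF w]] by (metis comp_apply)
  moreover have "w (inv_into UNIV w (inv_into UNIV v x)) = inv_into UNIV v x"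
    using thompsonV_surj[OF w] by (simp add: f_inv_into_f)
  ultimately show ?thesis
    by (simp add: pexp_def log2_slope_comp[OF v w])
qed

definition flip_head :: "cantor \<Rightarrow> cantor" where
  "flip_head x = x(0 := \<not> x 0)"

lemma cyl_partition_single_bit: "is_cyl_partition [[b], [\<not> b]]"
  unfolding is_cyl_partition_def
proof
  fix x :: cantor
  show "\<exists>!k. k < length [[b], [\<not> b]] \<and> x \<in> cyl ([[b], [\<not> b]] ! k)"
  proof (rule ex1I[of _ "if x 0 = b then 0 else 1"])
    fix k
    assume "k < length [[b], [\<not> b]] \<and> x \<in> cyl ([[b], [\<not> b]] ! k)"
    then show "k = (if x 0 = b then 0 else 1)"
      by (auto simp: cyl_iff less_Suc_eq)
  qed (simp add: cyl_iff)
qed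

lemma replaces_prefix_flip_head: "replaces_prefix flip_head [b] [\<not> b]"
  by (simp add: replaces_prefix_def flip_head_def cat_def fun_eq_iff)

lemma flip_head_thompsonV: "flip_head \<in> thompsonV"
proof -
  have "describes flip_head [[False], [True]] [[True], [False]]"
    using cyl_partition_single_bit[of False] cyl_partition_single_bit[of True]
      replaces_prefix_flip_head
    by (auto simp: describes_def replaces_prefix_def less_Suc_eq)
  then show ?thesis
    by (auto simp: thompsonV_def)
qed

lemma pexp_flip_head_zero: "pexp flip_head (\<lambda>_. False) = -1"
proof -
  have "cat [False] (\<lambda>_. False) = (\<lambda>_. False)"
    by (simp add: cat_def fun_eq_iff)
  then have inv: "inv_into UNIV flip_head (\<lambda>_. False) = cat [True] (\<lambda>_. False)"
    using thompsonV_inv_cat[OF flip_head_thompsonV replaces_prefix_flip_head[of True]] by metis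
  have "log2_slope flip_head (cat [True] (\<lambda>_. False)) = 0"
    using log2_slope_eq[OF flip_head_thompsonV cat_in_cyl replaces_prefix_flip_head] by simp
  moreover have "{n. cat [True] (\<lambda>_. False) n} = {0}"
    by (auto simp: cat_def)
  then have "nu (dyadic (cat [True] (\<lambda>_. False))) = -1"
    by (simp add: nu_dyadic)
  moreover have "nu (dyadic (\<lambda>_. False)) = 0"
    by (simp add: dyadic_def nu_def)
  ultimately show ?thesis
    by (simp add: pexp_def inv)
qed

section \<open>The cocycle and the automorphisms \<open>E\<^sub>\<zeta>\<close>\<close>

context group
begin

lemma centerI: "z \<in> carrier G \<Longrightarrow> (\<And>g. g \<in> carrier G \<Longrightarrow> z \<otimes> g = g \<otimes> z) \<Longrightarrow> z \<in> center G"
  by (simp add: center_def)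

lemma center_closed: "z \<in> center G \<Longrightarrow> z \<in> carrier G"
  by (simp add: center_def)

lemma center_commute: "z \<in> center G \<Longrightarrow> g \<in> carrier G \<Longrightarrow> z \<otimes> g = g \<otimes> z"
  by (simp add: center_def)

lemma subgroup_center: "subgroup (center G) G"
proof (rule subgroupI)
  show "center G \<subseteq> carrier G"
    using center_closed by blast
  have "\<one> \<in> center G"
    by (rule centerI) simp_all
  then show "center G \<noteq> {}"
    by blast
next
  fix a b
  assume a: "a \<in> center G" and b: "b \<in> center G"
  note ab = center_closed[OF a] center_closed[OF b]
  show "a \<otimes> b \<in> center G"
  proof (rule centerI)
    fix g
    assume g: "g \<in> carrier G"
    have "a \<otimes> b \<otimes> g = a \<otimes> (g \<otimes> b)"
      using g ab by (simp add: m_assoc center_commute[OF b])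
    also have "\<dots> = a \<otimes> g \<otimes> b"
      using g ab by (simp add: m_assoc)
    also have "\<dots> = g \<otimes> (a \<otimes> b)"
      using g ab by (simp add: m_assoc center_commute[OF a g])
    finally show "a \<otimes> b \<otimes> g = g \<otimes> (a \<otimes> b)" .
  qed (use ab in simp)
next
  fix a
  assume a: "a \<in> center G"
  show "inv a \<in> center G"
  proof (rule centerI)
    fix g
    assume g: "g \<in> carrier G"
    have "inv (inv g \<otimes> a) = inv (a \<otimes> inv g)"
      using center_commute[OF a, of "inv g"] g by simp
    then show "inv a \<otimes> g = g \<otimes> inv a"
      using center_closed[OF a] g by (simp add: inv_mult_group)
  qed (use center_closed[OF a] in simp)
qed

lemma cocyc_center: "\<zeta> \<in> center G \<Longrightarrow> cocyc G \<zeta> v x \<in> center G"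
  using subgroup_int_pow_closed[OF subgroup_center] subgroup.one_closed[OF subgroup_center]
  by (simp add: cocyc_def)

lemma cocyc_in_carrier: "\<zeta> \<in> center G \<Longrightarrow> cocyc G \<zeta> v x \<in> carrier G"
  using cocyc_center center_closed by blast

lemma cocyc_in_dsumQ2:
  assumes "\<zeta> \<in> center G" and "v \<in> thompsonV"
  shows "cocyc G \<zeta> v \<in> dsumQ2 G (center G)"
proof -
  have "{x. cocyc G \<zeta> v x \<noteq> \<one>} \<subseteq> {x \<in> Q2. pexp v x \<noteq> 0}"
    by (auto simp: cocyc_def)
  then have "finite {x. cocyc G \<zeta> v x \<noteq> \<one>}"
    using pexp_finite_support[OF assms(2)] by (rule finite_subset)
  with cocyc_center[OF assms(1)] show ?thesis
    by (simp add: dsumQ2_def cocyc_def)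
qed

lemma cocyc_comp:
  assumes "\<zeta> \<in> center G" and v: "v \<in> thompsonV" and w: "w \<in> thompsonV"
  shows "cocyc G \<zeta> (v \<circ> w) x = cocyc G \<zeta> v x \<otimes> cocyc G \<zeta> w (inv_into UNIV v x)"
  using center_closed[OF assms(1)] thompsonV_inv_Q2_iff[OF v, of x]
  by (simp add: cocyc_def pexp_comp[OF v w] int_pow_mult)

lemma cocyc_mult:
  assumes "\<zeta> \<in> center G" and "\<eta> \<in> center G"
  shows "cocyc G (\<zeta> \<otimes> \<eta>) v x = cocyc G \<zeta> v x \<otimes> cocyc G \<eta> v x"
proof -
  have "\<zeta> \<in> carrier G" and "\<eta> \<in> carrier G" and "\<zeta> \<otimes> \<eta> = \<eta> \<otimes> \<zeta>"
    using assms by (simp_all add: center_closed center_commute)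
  then show ?thesis
    unfolding cocyc_def using int_pow_mult_distrib by simp
qed

lemma cocyc_one: "cocyc G \<one> v x = \<one>"
  by (simp add: cocyc_def)

lemma carrier_semidir: "carrier (semidir G) = dsumQ2 G (carrier G) \<times> thompsonV"
  by (simp add: semidir_def)

lemma mult_semidir:
  "(a, v) \<otimes>\<^bsub>semidir G\<^esub> (b, w) = (\<lambda>x. a x \<otimes> b (inv_into UNIV v x), v \<circ> w)"
  by (simp add: semidir_def)

lemma dsumQ2_carrier: "a \<in> dsumQ2 G (carrier G) \<Longrightarrow> a x \<in> carrier G"
  by (simp add: dsumQ2_def)

lemma dsumQ2_mult_center:
  assumes a: "a \<in> dsumQ2 G (carrier G)" and c: "c \<in> dsumQ2 G (center G)"
  shows "(\<lambda>x. a x \<otimes> c x) \<in> dsumQ2 G (carrier G)"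
proof -
  have "{x. a x \<otimes> c x \<noteq> \<one>} \<subseteq> {x. a x \<noteq> \<one>} \<union> {x. c x \<noteq> \<one>}"
    by auto
  then have "finite {x. a x \<otimes> c x \<noteq> \<one>}"
    using a c by (auto simp: dsumQ2_def intro: finite_subset)
  moreover have "c x \<in> carrier G" for x
    using c center_closed by (simp add: dsumQ2_def)
  ultimately show ?thesis
    using a c by (simp add: dsumQ2_def)
qed

lemma dsumQ2_mult_translate:
  assumes a: "a \<in> dsumQ2 G (carrier G)" and b: "b \<in> dsumQ2 G (carrier G)"
    and v: "v \<in> thompsonV"
  shows "(\<lambda>x. a x \<otimes> b (inv_into UNIV v x)) \<in> dsumQ2 G (carrier G)"
proof -
  have "{x. a x \<otimes> b (inv_into UNIV v x) \<noteq> \<one>} \<subseteq> {x. a x \<noteq> \<one>} \<union> v ` {x. b x \<noteq> \<one>}"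
  proof
    fix x
    assume "x \<in> {x. a x \<otimes> b (inv_into UNIV v x) \<noteq> \<one>}"
    then have "a x \<noteq> \<one> \<or> b (inv_into UNIV v x) \<noteq> \<one>"
      by auto
    moreover have "x = v (inv_into UNIV v x)"
      using thompsonV_surj[OF v] by (simp add: f_inv_into_f)
    ultimately show "x \<in> {x. a x \<noteq> \<one>} \<union> v ` {x. b x \<noteq> \<one>}"
      by blast
  qed
  moreover have "finite ({x. a x \<noteq> \<one>} \<union> v ` {x. b x \<noteq> \<one>})"
    using a b by (simp add: dsumQ2_def)
  ultimately have "finite {x. a x \<otimes> b (inv_into UNIV v x) \<noteq> \<one>}"
    by (rule finite_subset)
  then show ?thesis
    using a b thompsonV_inv_Q2_iff[OF v] by (simp add: dsumQ2_def)
qed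

lemma semidir_mult_closed:
  "g \<in> carrier (semidir G) \<Longrightarrow> h \<in> carrier (semidir G) \<Longrightarrow> g \<otimes>\<^bsub>semidir G\<^esub> h \<in> carrier (semidir G)"
  by (cases g, cases h)
    (simp add: carrier_semidir mult_semidir dsumQ2_mult_translate thompsonV_comp)

lemma Emap_apply:
  "(a, v) \<in> carrier (semidir G) \<Longrightarrow> Emap G \<zeta> (a, v) = (\<lambda>x. a x \<otimes> cocyc G \<zeta> v x, v)"
  by (simp add: Emap_def)

lemma Emap_closed:
  "\<zeta> \<in> center G \<Longrightarrow> g \<in> carrier (semidir G) \<Longrightarrow> Emap G \<zeta> g \<in> carrier (semidir G)"
  by (cases g) (simp add: Emap_apply carrier_semidir dsumQ2_mult_center cocyc_in_dsumQ2)

lemma Emap_Emap: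
  assumes z: "\<zeta> \<in> center G" and e: "\<eta> \<in> center G" and g: "g \<in> carrier (semidir G)"
  shows "Emap G \<zeta> (Emap G \<eta> g) = Emap G (\<zeta> \<otimes> \<eta>) g"
proof -
  obtain a v where av: "g = (a, v)"
    by fastforce
  have "a x \<otimes> cocyc G \<eta> v x \<otimes> cocyc G \<zeta> v x = a x \<otimes> cocyc G (\<zeta> \<otimes> \<eta>) v x" for x
    using g av dsumQ2_carrier cocyc_in_carrier[OF z] cocyc_in_carrier[OF e]
      center_commute[OF cocyc_center[OF e] cocyc_in_carrier[OF z]]
    by (simp add: carrier_semidir cocyc_mult[OF z e] m_assoc)
  with Emap_closed[OF e g] g show ?thesis
    unfolding av by (simp add: Emap_apply)
qed

lemma Emap_one: "g \<in> carrier (semidir G) \<Longrightarrow> Emap G \<one> g = g"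
  by (cases g) (simp add: Emap_apply cocyc_one carrier_semidir dsumQ2_carrier)

lemma Emap_bij:
  assumes "\<zeta> \<in> center G"
  shows "bij_betw (Emap G \<zeta>) (carrier (semidir G)) (carrier (semidir G))"
proof (rule bij_betw_byWitness[where f' = "Emap G (inv \<zeta>)"])
  have "inv \<zeta> \<in> center G" and "\<zeta> \<in> carrier G"
    using assms subgroup.m_inv_closed[OF subgroup_center] center_closed by auto
  then show "\<forall>g \<in> carrier (semidir G). Emap G (inv \<zeta>) (Emap G \<zeta> g) = g"
    and "\<forall>g \<in> carrier (semidir G). Emap G \<zeta> (Emap G (inv \<zeta>) g) = g"
    and "Emap G \<zeta> ` carrier (semidir G) \<subseteq> carrier (semidir G)"
    and "Emap G (inv \<zeta>) ` carrier (semidir G) \<subseteq> carrier (semidir G)"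
    using assms by (auto simp: Emap_Emap Emap_one Emap_closed)
qed

text \<open>The cocycle identity is exactly what makes \<open>E\<^sub>\<zeta>\<close> multiplicative; centrality lets the
  factor \<open>c(\<zeta>)\<^sub>v\<close> move past \<open>v \<cdot> b\<close>.\<close>
lemma Emap_hom:
  assumes z: "\<zeta> \<in> center G"
  shows "Emap G \<zeta> \<in> hom (semidir G) (semidir G)"
proof (rule homI)
  fix g h
  assume g: "g \<in> carrier (semidir G)" and h: "h \<in> carrier (semidir G)"
  obtain a v b w where gh: "g = (a, v)" "h = (b, w)"
    by fastforce
  have a: "a \<in> dsumQ2 G (carrier G)" and v: "v \<in> thompsonV"
    and b: "b \<in> dsumQ2 G (carrier G)" and w: "w \<in> thompsonV"
    using g h gh by (auto simp: carrier_semidir)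
  have gh_closed: "(a, v) \<otimes>\<^bsub>semidir G\<^esub> (b, w) \<in> carrier (semidir G)"
    using semidir_mult_closed g h gh by simp
  have "a x \<otimes> b (inv_into UNIV v x) \<otimes> cocyc G \<zeta> (v \<circ> w) x =
      a x \<otimes> cocyc G \<zeta> v x \<otimes> (b (inv_into UNIV v x) \<otimes> cocyc G \<zeta> w (inv_into UNIV v x))" for x
  proof -
    define b' c c' where "b' = b (inv_into UNIV v x)" and "c = cocyc G \<zeta> v x"
      and "c' = cocyc G \<zeta> w (inv_into UNIV v x)"
    have carr: "a x \<in> carrier G" "b' \<in> carrier G" "c \<in> carrier G" "c' \<in> carrier G"
      using dsumQ2_carrier[OF a] dsumQ2_carrier[OF b] cocyc_in_carrier[OF z]
      by (simp_all add: b'_def c_def c'_def)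
    have "a x \<otimes> b' \<otimes> cocyc G \<zeta> (v \<circ> w) x = a x \<otimes> (b' \<otimes> c) \<otimes> c'"
      using carr by (simp add: cocyc_comp[OF z v w] c_def c'_def m_assoc)
    also have "\<dots> = a x \<otimes> (c \<otimes> b') \<otimes> c'"
      using center_commute[OF cocyc_center[OF z] carr(2)] by (simp add: c_def)
    also have "\<dots> = a x \<otimes> c \<otimes> (b' \<otimes> c')"
      using carr by (simp add: m_assoc)
    finally show ?thesis
      by (simp add: b'_def c_def c'_def)
  qed
  with g h gh_closed show "Emap G \<zeta> (g \<otimes>\<^bsub>semidir G\<^esub> h) = Emap G \<zeta> g \<otimes>\<^bsub>semidir G\<^esub> Emap G \<zeta> h"
    unfolding gh by (simp add: mult_semidir Emap_apply)
qed (rule Emap_closed[OF z])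

lemma Emap_auto: "\<zeta> \<in> center G \<Longrightarrow> Emap G \<zeta> \<in> auto (semidir G)"
  using Emap_hom Emap_bij by (simp add: auto_def Bij_def Emap_def)

lemma Emap_hom_AutoGroup: "Emap G \<in> hom (G\<lparr>carrier := center G\<rparr>) (AutoGroup (semidir G))"
proof (rule homI)
  fix \<zeta>
  assume "\<zeta> \<in> carrier (G\<lparr>carrier := center G\<rparr>)"
  then show "Emap G \<zeta> \<in> carrier (AutoGroup (semidir G))"
    using Emap_auto by (simp add: AutoGroup_def BijGroup_def)
next
  fix \<zeta> \<eta>
  assume "\<zeta> \<in> carrier (G\<lparr>carrier := center G\<rparr>)" and "\<eta> \<in> carrier (G\<lparr>carrier := center G\<rparr>)"
  then have z: "\<zeta> \<in> center G" and e: "\<eta> \<in> center G"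
    by simp_all
  have "Emap G (\<zeta> \<otimes> \<eta>) = compose (carrier (semidir G)) (Emap G \<zeta>) (Emap G \<eta>)"
    by (rule extensionalityI[where A = "carrier (semidir G)"])
      (simp_all add: Emap_def[of G "\<zeta> \<otimes> \<eta>"] compose_def Emap_Emap[OF z e])
  moreover have "Emap G \<zeta> \<in> Bij (carrier (semidir G))" and "Emap G \<eta> \<in> Bij (carrier (semidir G))"
    using Emap_auto z e by (simp_all add: auto_def)
  ultimately show "Emap G (\<zeta> \<otimes>\<^bsub>G\<lparr>carrier := center G\<rparr>\<^esub> \<eta>) =
      Emap G \<zeta> \<otimes>\<^bsub>AutoGroup (semidir G)\<^esub> Emap G \<eta>"
    by (simp add: AutoGroup_def BijGroup_def)
qed

lemma inj_on_Emap: "inj_on (Emap G) (center G)"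
proof (rule inj_onI)
  fix \<zeta> \<eta>
  assume z: "\<zeta> \<in> center G" and e: "\<eta> \<in> center G" and eq: "Emap G \<zeta> = Emap G \<eta>"
  have flip: "(\<lambda>_. \<one>, flip_head) \<in> carrier (semidir G)"
    using flip_head_thompsonV by (simp add: carrier_semidir dsumQ2_def)
  have "fst (Emap G \<xi> (\<lambda>_. \<one>, flip_head)) (\<lambda>_. False) = inv \<xi>" if "\<xi> \<in> center G" for \<xi>
    using center_closed[OF that] flip
    by (simp add: Emap_apply cocyc_def pexp_flip_head_zero Q2_def int_pow_neg)
  then have "inv \<zeta> = inv \<eta>"
    using eq z e by metis
  then show "\<zeta> = \<eta>"
    using center_closed z e by (metis inv_inv)
qed

end

theorem mainTheorem13:
  fixes \<Gamma> :: "('g, 'b) monoid_scheme"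
  assumes "group \<Gamma>"
  shows "(\<forall>\<zeta> \<in> center \<Gamma>. \<forall>v \<in> thompsonV. cocyc \<Gamma> \<zeta> v \<in> dsumQ2 \<Gamma> (center \<Gamma>))
       \<and> (\<forall>\<zeta> \<in> center \<Gamma>. \<forall>v \<in> thompsonV. \<forall>w \<in> thompsonV. \<forall>x \<in> Q2.
             cocyc \<Gamma> \<zeta> (v \<circ> w) x = cocyc \<Gamma> \<zeta> v x \<otimes>\<^bsub>\<Gamma>\<^esub> cocyc \<Gamma> \<zeta> w (inv_into UNIV v x))
       \<and> (\<forall>\<zeta> \<in> center \<Gamma>. Emap \<Gamma> \<zeta> \<in> auto (semidir \<Gamma>))
       \<and> Emap \<Gamma> \<in> hom (\<Gamma>\<lparr>carrier := center \<Gamma>\<rparr>) (AutoGroup (semidir \<Gamma>))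
       \<and> inj_on (Emap \<Gamma>) (center \<Gamma>)"
proof -
  interpret group \<Gamma>
    by (rule assms)
  show ?thesis
    using cocyc_in_dsumQ2 cocyc_comp Emap_auto Emap_hom_AutoGroup inj_on_Emap by blast
qed

end
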